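(* Let $r\ge 3$ be an integer and $p\ge 5$ an odd prime. Let $e_0=1$, $e_i=\zeta_{2^r}^i+\zeta_{2^r}^{-i}$ ($i\ge1$), $n_1=2^{r-2}$, $b_j=\zeta_p^j+\zeta_p^{-j}$ ($j\ge1$), $n_2=\frac{p-1}{2}$, and let $\mathbb{K}=\mathbb{Q}(\zeta_{2^r}+\zeta_{2^r}^{-1})\,\mathbb{Q}(\zeta_p+\zeta_p^{-1})$. Let $\mathcal{I}\subseteq\mathcal{O}_{\mathbb{K}}$ be the $\mathbb{Z}$-module with $\mathbb{Z}$-basis consisting of all products $e_ib_j$ ($0\le i\le n_1-1$, $1\le j\le n_2$) except that $e_0b_{n_2}$ is replaced by $2e_0b_{n_2}$. Then $\mathcal{I}$ is not an ideal of $\mathcal{O}_{\mathbb{K}}$.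
   Context: $\zeta_m=e^{2\pi i/m}$. *)

theory Defs
  imports "HOL-Analysis.Analysis" "HOL-Computational_Algebra.Polynomial"
begin

definition zeta :: "nat \<Rightarrow> complex" where
  "zeta m = cis (2 * pi / real m)"

definition eR :: "nat \<Rightarrow> nat \<Rightarrow> complex" where
  "eR r i = (if i = 0 then 1 else zeta (2^r) ^ i + inverse (zeta (2^r) ^ i))"

definition bP :: "nat \<Rightarrow> nat \<Rightarrow> complex" where
  "bP p j = zeta p ^ j + inverse (zeta p ^ j)"

definition is_subfield :: "complex set \<Rightarrow> bool" where
  "is_subfield F \<longleftrightarrow> 0 \<in> F \<and> 1 \<in> F \<and>
     (\<forall>x\<in>F. \<forall>y\<in>F. x + y \<in> F \<and> x - y \<in> F \<and> x * y \<in> F) \<and>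
     (\<forall>x\<in>F. x \<noteq> 0 \<longrightarrow> inverse x \<in> F)"

definition gen_field :: "complex set \<Rightarrow> complex set" where
  "gen_field S = \<Inter> {F. is_subfield F \<and> S \<subseteq> F}"

(* K = Q(zeta_{2^r}+zeta_{2^r}^{-1}) Q(zeta_p+zeta_p^{-1}): the compositum, i.e. the
   subfield of C generated by both fields (equivalently by both generators) *)
definition KK :: "nat \<Rightarrow> nat \<Rightarrow> complex set" where
  "KK r p = gen_field (gen_field {eR r 1} \<union> gen_field {bP p 1})"

definition ring_of_integers :: "complex set \<Rightarrow> complex set" where
  "ring_of_integers K = {x \<in> K. algebraic_int x}"

definition is_ideal :: "complex set \<Rightarrow> complex set \<Rightarrow> bool" where
  "is_ideal I R \<longleftrightarrow> I \<subseteq> R \<and> 0 \<in> I \<and>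
     (\<forall>x\<in>I. \<forall>y\<in>I. x + y \<in> I \<and> - x \<in> I) \<and>
     (\<forall>r\<in>R. \<forall>x\<in>I. r * x \<in> I)"

definition Zspan :: "'i set \<Rightarrow> ('i \<Rightarrow> complex) \<Rightarrow> complex set" where
  "Zspan A f = {\<Sum>a\<in>A. of_int (c a) * f a | c. True}"

definition basis_elt :: "nat \<Rightarrow> nat \<Rightarrow> nat \<times> nat \<Rightarrow> complex" where
  "basis_elt r p ij = (let (i, j) = ij in
     (if i = 0 \<and> j = (p - 1) div 2 then 2 else 1) * eR r i * bP p j)"

definition II :: "nat \<Rightarrow> nat \<Rightarrow> complex set" where
  "II r p = Zspan ({0..<2^(r-2)} \<times> {1..(p - 1) div 2}) (basis_elt r p)"

end

theory Submission
  imports Defs "Jordan_Normal_Form.Char_Poly" "HOL-Number_Theory.Residues"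
begin

text \<open>
  If \<open>I\<close> were an ideal it would contain \<open>b_1 b_(n2-1) = b_n2 + b_(n2-2)\<close>, because
  \<open>b_1\<close> is integral and \<open>b_(n2-1)\<close> is a basis element. Raise a \<open>\<int>\<close>-combination of the
  basis to the power \<open>q = 2^(r(p-1))\<close> and reduce modulo 2: the Frobenius kills every
  \<open>e_i\<close> with \<open>i \<ge> 1\<close> (as \<open>\<zeta>_(2^r)^q = 1\<close>) and fixes every \<open>b_j\<close> (as \<open>q \<equiv> 1 mod p\<close>).
  Since \<open>e_0 b_n2\<close> enters \<open>I\<close> only doubled, a combination of the \<open>b_j\<close> with odd
  coefficient at \<open>b_n2\<close> becomes divisible by 2 among the algebraic integers. After
  multiplying by \<open>\<zeta>_p^(n2+1)\<close> its trace over \<open>\<rat>(\<zeta>_p)\<close> is odd: the term \<open>\<zeta>_p^p = 1\<close>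
  coming from \<open>b_n2\<close> has trace \<open>p - 1\<close>, every other term has trace \<open>-1\<close>.

  That such traces of algebraic integers are integers requires the conjugates \<open>\<zeta>_p^s\<close>
  to satisfy every integer polynomial relation of \<open>\<zeta>_p\<close>. This follows from a
  \<open>(1 - \<zeta>_p)\<close>-adic descent, as \<open>(1 - \<zeta>_p)^(p-1) / p\<close> and \<open>p / (1 - \<zeta>_p)\<close> are integral.
\<close>

hide_const (open) up_ring.coeff up_ring.monom

subsection \<open>Algebraic integers form a ring\<close>

lemma Zspan_zero: "0 \<in> Zspan A f"
  unfolding Zspan_def by (rule CollectI, rule exI[of _ "\<lambda>_. 0"]) simp

lemma Zspan_add: "a \<in> Zspan A f \<Longrightarrow> b \<in> Zspan A f \<Longrightarrow> a + b \<in> Zspan A f"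
proof -
  assume "a \<in> Zspan A f" "b \<in> Zspan A f"
  then obtain c d where "a = (\<Sum>k\<in>A. of_int (c k) * f k)" "b = (\<Sum>k\<in>A. of_int (d k) * f k)"
    unfolding Zspan_def by blast
  hence "a + b = (\<Sum>k\<in>A. of_int (c k + d k) * f k)" by (simp add: sum.distrib algebra_simps)
  thus ?thesis unfolding Zspan_def by (intro CollectI exI[of _ "\<lambda>k. c k + d k"]) simp
qed

lemma Zspan_of_int_mult: "a \<in> Zspan A f \<Longrightarrow> of_int e * a \<in> Zspan A f"
proof -
  assume "a \<in> Zspan A f"
  then obtain c where "a = (\<Sum>k\<in>A. of_int (c k) * f k)" unfolding Zspan_def by blast
  hence "of_int e * a = (\<Sum>k\<in>A. of_int (e * c k) * f k)"
    by (simp add: sum_distrib_left algebra_simps)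
  thus ?thesis unfolding Zspan_def by (intro CollectI exI[of _ "\<lambda>k. e * c k"]) simp
qed

lemma Zspan_sum:
  "finite B \<Longrightarrow> (\<And>b. b \<in> B \<Longrightarrow> h b \<in> Zspan A f) \<Longrightarrow> (\<Sum>b\<in>B. h b) \<in> Zspan A f"
  by (induction B rule: finite_induct) (auto intro: Zspan_zero Zspan_add)

lemma Zspan_elt:
  assumes "finite A" "x \<in> A"
  shows "f x \<in> Zspan A f"
proof -
  have "(\<Sum>a\<in>A. of_int (if a = x then 1 else 0) * f a) = (\<Sum>a\<in>A. if a = x then f a else 0)"
    by (intro sum.cong refl) auto
  also have "\<dots> = f x" using assms by (simp add: sum.delta)
  finally have "f x = (\<Sum>a\<in>A. of_int (if a = x then 1 else 0) * f a)" by simp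
  thus ?thesis unfolding Zspan_def by (intro CollectI exI[of _ "\<lambda>a. if a = x then 1 else 0"]) simp
qed

lemma algebraic_int_eigenvalue_of_int_mat:
  fixes x :: complex and A :: "int mat" and w :: "complex vec"
  assumes A: "A \<in> carrier_mat n n" and w: "w \<in> carrier_vec n" "w \<noteq> 0\<^sub>v n"
    and eq: "map_mat of_int A *\<^sub>v w = x \<cdot>\<^sub>v w"
  shows "algebraic_int x"
proof -
  have A': "(map_mat of_int A :: complex mat) \<in> carrier_mat n n" using A by auto
  have "eigenvector (map_mat of_int A) w x" unfolding eigenvector_def using A w eq by auto
  hence "eigenvalue (map_mat of_int A) x" unfolding eigenvalue_def by blast
  hence "poly (char_poly (map_mat of_int A)) x = 0"
    using eigenvalue_root_char_poly[OF A'] by simp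
  moreover have "char_poly (map_mat of_int A :: complex mat) = map_poly of_int (char_poly A)"
    by (rule of_int_hom.char_poly_hom[OF A])
  ultimately have "poly (map_poly of_int (char_poly A)) x = 0" by simp
  moreover have "lead_coeff (char_poly A) = 1" using degree_monic_char_poly[OF A] by simp
  ultimately show ?thesis unfolding algebraic_int_altdef_ipoly by blast
qed

lemma algebraic_int_if_Zspan_closed:
  fixes N :: nat
  assumes N: "N > 0" and g0: "g 0 = 1" and closed: "\<And>k. k < N \<Longrightarrow> x * g k \<in> Zspan {..<N} g"
  shows "algebraic_int x"
proof -
  have "\<forall>k. \<exists>c. k < N \<longrightarrow> x * g k = (\<Sum>l<N. of_int (c l) * g l)"
    using closed unfolding Zspan_def by blast
  then obtain c where c: "\<And>k. k < N \<Longrightarrow> x * g k = (\<Sum>l<N. of_int (c k l) * g l)"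
    by metis
  define A :: "int mat" where "A = mat N N (\<lambda>(k,l). c k l)"
  define w :: "complex vec" where "w = vec N g"
  have A: "A \<in> carrier_mat N N" unfolding A_def by auto
  have w: "w \<in> carrier_vec N" unfolding w_def by auto
  have w0: "w \<noteq> 0\<^sub>v N"
  proof
    assume "w = 0\<^sub>v N"
    hence "w $ 0 = 0" using N by simp
    thus False using N g0 unfolding w_def by simp
  qed
  have "map_mat of_int A *\<^sub>v w = x \<cdot>\<^sub>v w"
  proof (rule eq_vecI)
    fix k assume k: "k < dim_vec (x \<cdot>\<^sub>v w)"
    hence k': "k < N" using w by simp
    have "(map_mat of_int A *\<^sub>v w) $ k = (\<Sum>l<N. of_int (c k l) * g l)"
      using k' A w unfolding A_def w_def
      by (simp add: mult_mat_vec_def scalar_prod_def lessThan_atLeast0)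
    also have "\<dots> = x * g k" using c[OF k'] by simp
    finally show "(map_mat of_int A *\<^sub>v w) $ k = (x \<cdot>\<^sub>v w) $ k"
      using k' unfolding w_def by simp
  qed (use A w in auto)
  thus ?thesis using algebraic_int_eigenvalue_of_int_mat[OF A w w0] by blast
qed

lemma power_in_Zspan_if_monic_root:
  fixes x :: complex and q :: "int poly"
  assumes root: "poly (map_poly of_int q) x = 0" and monic: "lead_coeff q = 1"
  shows "x ^ i \<in> Zspan {..<degree q} (\<lambda>a. x ^ a)"
proof (induction i rule: less_induct)
  case (less i)
  define m where "m = degree q"
  show ?case
  proof (cases "i < m")
    case True thus ?thesis using Zspan_elt[of "{..<m}" i "\<lambda>a. x ^ a"] unfolding m_def by simp
  next
    case False
    have "0 = (\<Sum>a\<le>m. of_int (coeff q a) * x ^ a)"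
      using root by (simp add: poly_altdef m_def degree_map_poly coeff_map_poly)
    also have "\<dots> = (\<Sum>a<m. of_int (coeff q a) * x ^ a) + x ^ m"
      using monic by (simp add: lessThan_Suc_atMost[symmetric] m_def)
    finally have xm: "x ^ m = - (\<Sum>a<m. of_int (coeff q a) * x ^ a)"
      by (simp add: eq_neg_iff_add_eq_0 add.commute)
    have "x ^ i = x ^ (i - m) * x ^ m" using False by (simp flip: power_add)
    also have "\<dots> = (\<Sum>a<m. of_int (- coeff q a) * x ^ (i - m + a))"
      by (simp add: xm sum_distrib_left sum_negf[symmetric] power_add mult_ac)
    also have "\<dots> \<in> Zspan {..<degree q} (\<lambda>a. x ^ a)"
    proof (rule Zspan_sum, simp, rule Zspan_of_int_mult)
      fix a assume "a \<in> {..<m}"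
      hence "i - m + a < i" using False by auto
      thus "x ^ (i - m + a) \<in> Zspan {..<degree q} (\<lambda>a. x ^ a)" using less by blast
    qed
    finally show ?thesis .
  qed
qed

lemma algebraic_int_obtain_monic_poly:
  fixes x :: complex
  assumes "algebraic_int x"
  obtains q where "poly (map_poly of_int q) x = 0" "lead_coeff q = 1" "degree q > 0"
proof -
  obtain q where q: "poly (map_poly of_int q) x = 0" "lead_coeff q = 1"
    using assms unfolding algebraic_int_altdef_ipoly by blast
  have "degree q \<noteq> 0"
  proof
    assume d0: "degree q = 0"
    hence "poly (map_poly of_int q) x = of_int (coeff q 0)"
      by (simp add: poly_altdef degree_map_poly coeff_map_poly)
    also have "coeff q 0 = 1" using q(2) d0 by simp
    finally show False using q(1) by simp
  qed
  thus ?thesis using q that by blast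
qed

lemma monomials_in_Zspan:
  fixes x y :: complex
  assumes x: "algebraic_int x" and y: "algebraic_int y"
  obtains N g where "(N::nat) > 0" "g 0 = 1" "\<And>i j. x ^ i * y ^ j \<in> Zspan {..<N} g"
    "\<And>k. \<exists>i j. g k = x ^ i * y ^ j"
proof -
  obtain p where p: "poly (map_poly of_int p) x = 0" "lead_coeff p = 1" "degree p > 0"
    using algebraic_int_obtain_monic_poly[OF x] by blast
  obtain q where q: "poly (map_poly of_int q) y = 0" "lead_coeff q = 1" "degree q > 0"
    using algebraic_int_obtain_monic_poly[OF y] by blast
  define m where "m = degree p"
  define n where "n = degree q"
  define g where "g = (\<lambda>k. x ^ (k div n) * y ^ (k mod n))"
  define N where "N = m * n"
  have "x ^ i * y ^ j \<in> Zspan {..<N} g" for i j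
  proof -
    obtain c where c: "x ^ i = (\<Sum>a<m. of_int (c a) * x ^ a)"
      using power_in_Zspan_if_monic_root[OF p(1,2), of i] unfolding Zspan_def m_def by blast
    obtain d where d: "y ^ j = (\<Sum>b<n. of_int (d b) * y ^ b)"
      using power_in_Zspan_if_monic_root[OF q(1,2), of j] unfolding Zspan_def n_def by blast
    have "x ^ i * y ^ j = (\<Sum>a<m. \<Sum>b<n. of_int (c a * d b) * (x ^ a * y ^ b))"
      unfolding c d by (simp add: sum_product of_int_mult mult_ac)
    also have "\<dots> \<in> Zspan {..<N} g"
    proof (intro Zspan_sum Zspan_of_int_mult, simp, simp)
      fix a b assume ab: "a \<in> {..<m}" "b \<in> {..<n}"
      have "a * n + b < Suc a * n" using ab by simp
      also have "\<dots> \<le> m * n" using ab by (intro mult_right_mono) auto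
      finally have "a * n + b \<in> {..<N}" unfolding N_def by simp
      moreover have "g (a * n + b) = x ^ a * y ^ b" using ab unfolding g_def by simp
      ultimately show "x ^ a * y ^ b \<in> Zspan {..<N} g" using Zspan_elt[of "{..<N}" "a * n + b" g] by simp
    qed
    finally show ?thesis .
  qed
  moreover have "N > 0" using p q unfolding N_def m_def n_def by simp
  moreover have "g 0 = 1" unfolding g_def by simp
  moreover have "\<exists>i j. g k = x ^ i * y ^ j" for k unfolding g_def by blast
  ultimately show ?thesis using that by blast
qed

lemma algebraic_int_add [intro]:
  fixes x y :: complex
  assumes "algebraic_int x" "algebraic_int y"
  shows "algebraic_int (x + y)"
proof -
  obtain N :: nat and g where N: "N > 0" "g 0 = 1" and span: "\<And>i j. x ^ i * y ^ j \<in> Zspan {..<N} g"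
    and mono: "\<And>k. \<exists>i j. g k = x ^ i * y ^ j"
    using monomials_in_Zspan[OF assms] by blast
  show ?thesis
  proof (rule algebraic_int_if_Zspan_closed[where g = g, OF N])
    fix k
    obtain i j where "g k = x ^ i * y ^ j" using mono by blast
    hence "(x + y) * g k = x ^ Suc i * y ^ j + x ^ i * y ^ Suc j" by (simp add: algebra_simps)
    thus "(x + y) * g k \<in> Zspan {..<N} g" using span Zspan_add by metis
  qed
qed

lemma algebraic_int_mult [intro]:
  fixes x y :: complex
  assumes "algebraic_int x" "algebraic_int y"
  shows "algebraic_int (x * y)"
proof -
  obtain N :: nat and g where N: "N > 0" "g 0 = 1" and span: "\<And>i j. x ^ i * y ^ j \<in> Zspan {..<N} g"
    and mono: "\<And>k. \<exists>i j. g k = x ^ i * y ^ j"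
    using monomials_in_Zspan[OF assms] by blast
  show ?thesis
  proof (rule algebraic_int_if_Zspan_closed[where g = g, OF N])
    fix k
    obtain i j where "g k = x ^ i * y ^ j" using mono by blast
    hence "(x * y) * g k = x ^ Suc i * y ^ Suc j" by (simp add: algebra_simps)
    thus "(x * y) * g k \<in> Zspan {..<N} g" using span by metis
  qed
qed

lemma algebraic_int_diff [intro]:
  "algebraic_int (x::complex) \<Longrightarrow> algebraic_int y \<Longrightarrow> algebraic_int (x - y)"
  using algebraic_int_add[of x "-y"] by simp

lemma algebraic_int_power [intro]: "algebraic_int (x::complex) \<Longrightarrow> algebraic_int (x ^ n)"
  by (induction n) auto

lemma algebraic_int_sum [intro]:
  "(\<And>a. a \<in> A \<Longrightarrow> algebraic_int (f a :: complex)) \<Longrightarrow> algebraic_int (sum f A)"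
  by (induction A rule: infinite_finite_induct) auto

subsection \<open>Roots of unity\<close>

lemma zeta_power: "zeta n ^ k = cis (2 * pi * real k / real n)"
  unfolding zeta_def Complex.DeMoivre by (simp add: field_simps)

lemma zeta_nonzero: "zeta n \<noteq> 0"
  unfolding zeta_def by simp

lemma zeta_power_self: "n > 0 \<Longrightarrow> zeta n ^ n = 1"
  unfolding zeta_power by simp

lemma power_mod_if_root_of_unity: "z ^ n = (1::complex) \<Longrightarrow> z ^ k = z ^ (k mod n)"
proof -
  assume z: "z ^ n = 1"
  have "z ^ k = z ^ (n * (k div n) + k mod n)" by simp
  also have "\<dots> = (z ^ n) ^ (k div n) * z ^ (k mod n)" by (simp only: power_add power_mult)
  also have "\<dots> = z ^ (k mod n)" using z by simp
  finally show ?thesis .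
qed

lemma zeta_power_mod: "n > 0 \<Longrightarrow> zeta n ^ k = zeta n ^ (k mod n)"
  by (intro power_mod_if_root_of_unity zeta_power_self)

lemma zeta_power_eq_1_iff: assumes n: "n > 0" shows "zeta n ^ k = 1 \<longleftrightarrow> n dvd k"
proof
  assume "n dvd k"
  then obtain j where "k = n * j" by blast
  thus "zeta n ^ k = 1" using n by (simp add: power_mult zeta_power_self)
next
  assume h: "zeta n ^ k = 1"
  have "zeta n ^ k = zeta n ^ (k mod n)" using n by (rule zeta_power_mod)
  hence "cis (2 * pi * real (k mod n) / real n) = cis (2 * pi * real 0 / real n)"
    using h by (simp add: zeta_power)
  moreover have "inj_on (\<lambda>k. cis (2 * pi * real k / real n)) {..<n}"
    using Complex.bij_betw_roots_unity[OF n] by (simp add: bij_betw_def)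
  ultimately have "k mod n = 0" using n by (auto simp: inj_on_def)
  thus "n dvd k" by auto
qed

lemma power_zeta_power_self: "n > 0 \<Longrightarrow> (zeta n ^ k) ^ n = 1"
  by (simp only: power_mult[symmetric] mult.commute[of k] power_mult zeta_power_self power_one)

lemma algebraic_int_zeta_power: "n > 0 \<Longrightarrow> algebraic_int (zeta n ^ k)"
  by (rule algebraic_int_root[where p = "Polynomial.monom 1 n" and y = 1])
     (auto simp: poly_monom degree_monom_eq power_zeta_power_self)

lemma inverse_zeta_power: "n > 0 \<Longrightarrow> inverse (zeta n ^ k) = zeta n ^ (k * (n - 1))"
proof -
  assume n: "n > 0"
  have "k + k * (n - 1) = k * n" using n by (cases n) (auto simp: algebra_simps)
  hence "zeta n ^ k * zeta n ^ (k * (n - 1)) = (zeta n ^ k) ^ n" by (simp flip: power_add power_mult)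
  also have "\<dots> = 1" using n by (rule power_zeta_power_self)
  finally show ?thesis by (simp add: inverse_unique)
qed

lemma sum_powers_zeta_power_eq_0:
  assumes n: "n > 0" and "\<not> n dvd s"
  shows "(\<Sum>i<n. (zeta n ^ s) ^ i) = 0"
proof -
  have "zeta n ^ s \<noteq> 1" using zeta_power_eq_1_iff[OF n] assms(2) by simp
  thus ?thesis using geometric_sum[of "zeta n ^ s" n] power_zeta_power_self[OF n] by simp
qed

lemma poly_of_int_eq_sum:
  fixes q :: "int poly"
  assumes "degree q \<le> n"
  shows "poly (map_poly of_int q) (z::complex) = (\<Sum>i\<le>n. of_int (coeff q i) * z ^ i)"
  using assms by (simp add: poly_altdef degree_map_poly coeff_map_poly
      sum.mono_neutral_right[of "{..n}" "{..degree q}"] coeff_eq_0)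

lemma map_poly_of_int_sum:
  "map_poly (of_int :: int \<Rightarrow> 'a::ring_1) (\<Sum>j\<in>J. f j) = (\<Sum>j\<in>J. map_poly of_int (f j))"
  by (rule poly_eqI) (simp add: coeff_map_poly coeff_sum)

lemma poly_root_of_unity_eq_sum_mod:
  fixes f :: "int poly"
  assumes n: "n > 0" and z: "z ^ n = (1::complex)"
  shows "poly (map_poly of_int f) z =
    (\<Sum>i<n. of_int (\<Sum>k\<in>{k\<in>{..degree f}. k mod n = i}. coeff f k) * z ^ i)"
proof -
  have "poly (map_poly of_int f) z = (\<Sum>k\<le>degree f. of_int (coeff f k) * z ^ (k mod n))"
    using poly_of_int_eq_sum[of f "degree f" z] power_mod_if_root_of_unity[OF z] by simp
  also have "\<dots> = (\<Sum>i<n. \<Sum>k\<in>{k\<in>{..degree f}. k mod n = i}. of_int (coeff f k) * z ^ (k mod n))"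
    by (rule sum.group[symmetric]) (use n in auto)
  also have "\<dots> = (\<Sum>i<n. \<Sum>k\<in>{k\<in>{..degree f}. k mod n = i}. of_int (coeff f k) * z ^ i)"
    by (intro sum.cong refl) auto
  also have "\<dots> = (\<Sum>i<n. of_int (\<Sum>k\<in>{k\<in>{..degree f}. k mod n = i}. coeff f k) * z ^ i)"
    by (simp add: sum_distrib_right)
  finally show ?thesis .
qed

subsection \<open>Conjugates of \<open>\<zeta>\<^sub>p\<close>\<close>

locale odd_prime =
  fixes p :: nat
  assumes prime_p: "prime p" and odd_p: "odd p"
begin

definition \<pi> :: complex where "\<pi> = 1 - zeta p"

lemma p_gt_2: "p > 2"
  using prime_p odd_p prime_gt_1_nat[OF prime_p] by (cases "p = 2") auto

lemma zeta_ne_1: "zeta p \<noteq> 1"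
  using zeta_power_eq_1_iff[of p 1] p_gt_2 by auto

lemma pi_nonzero: "\<pi> \<noteq> 0"
  using zeta_ne_1 unfolding \<pi>_def by simp

lemma algebraic_int_pi: "algebraic_int \<pi>"
  using algebraic_int_zeta_power[of p 1] p_gt_2 unfolding \<pi>_def by auto

text \<open>Expand \<open>(1 - \<pi>)^p = 1\<close>; all middle binomial coefficients are divisible by \<open>p\<close>.\<close>

lemma pi_power_eq: "\<exists>W. algebraic_int W \<and> \<pi> ^ (p - 1) = of_nat p * (\<pi> * W - 1)"
proof -
  define c where "c = (\<lambda>k. (p choose k) div p)"
  have cdiv: "p choose k = p * c k" if "k \<in> {2..<p}" for k
    using dvd_choose_prime[of k p] that prime_p unfolding c_def by auto
  define W where "W = (\<Sum>k\<in>{2..<p}. of_nat (c k) * (- \<pi>) ^ (k - 2))"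
  have aW: "algebraic_int W"
    unfolding W_def by (intro algebraic_int_sum algebraic_int_mult algebraic_int_power
        algebraic_int_of_nat algebraic_int_minus algebraic_int_pi)
  define f where "f = (\<lambda>k. of_nat (p choose k) * (- \<pi>) ^ k * (1::complex) ^ (p - k))"
  have "1 = (- \<pi> + 1) ^ p" using zeta_power_self[of p] p_gt_2 unfolding \<pi>_def by simp
  also have "\<dots> = (\<Sum>k\<le>p. f k)" unfolding f_def by (rule binomial_ring)
  also have "{..p} = insert 0 (insert 1 (insert p {2..<p}))" using p_gt_2 by auto
  also have "(\<Sum>k\<in>insert 0 (insert 1 (insert p {2..<p})). f k) = f 0 + f 1 + f p + (\<Sum>k\<in>{2..<p}. f k)"
    using p_gt_2 by (simp add: sum.insert)
  also have "(\<Sum>k\<in>{2..<p}. f k) = (\<Sum>k\<in>{2..<p}. of_nat p * \<pi>^2 * (of_nat (c k) * (- \<pi>) ^ (k - 2)))"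
  proof (rule sum.cong[OF refl])
    fix k assume k: "k \<in> {2..<p}"
    have "2 + (k - 2) = k" using k by auto
    hence "(- \<pi>) ^ k = (- \<pi>) ^ (2 + (k - 2))" by (simp only:)
    also have "\<dots> = (- \<pi>)^2 * (- \<pi>) ^ (k - 2)" by (rule power_add)
    finally show "f k = of_nat p * \<pi>^2 * (of_nat (c k) * (- \<pi>) ^ (k - 2))"
      unfolding f_def cdiv[OF k] by (simp add: algebra_simps)
  qed
  also have "\<dots> = of_nat p * \<pi>^2 * W" unfolding W_def by (simp add: sum_distrib_left)
  also have "f 0 + f 1 + f p = 1 - of_nat p * \<pi> - \<pi> ^ p" unfolding f_def using odd_p by simp
  finally have "1 = 1 - of_nat p * \<pi> - \<pi> ^ p + of_nat p * \<pi>^2 * W" .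
  moreover have "\<pi> ^ p = \<pi> * \<pi> ^ (p - 1)" using power_Suc[of \<pi> "p - 1"] p_gt_2 by simp
  ultimately have "\<pi> * (\<pi> ^ (p - 1) - of_nat p * (\<pi> * W - 1)) = 0"
    by (simp add: algebra_simps power2_eq_square)
  hence "\<pi> ^ (p - 1) = of_nat p * (\<pi> * W - 1)" using pi_nonzero by simp
  thus ?thesis using aW by blast
qed

lemma algebraic_int_pi_power_div_p: "algebraic_int (\<pi> ^ (p - 1) / of_nat p)"
proof -
  obtain W where W: "algebraic_int W" "\<pi> ^ (p - 1) = of_nat p * (\<pi> * W - 1)"
    using pi_power_eq by blast
  have "\<pi> ^ (p - 1) / of_nat p = \<pi> * W - 1" using W(2) p_gt_2 by simp
  thus ?thesis using W(1) algebraic_int_pi by auto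
qed

lemma algebraic_int_p_div_pi_power: "j \<le> p - 1 \<Longrightarrow> algebraic_int (of_nat p / \<pi> ^ j)"
proof (induction j)
  case 0 thus ?case by simp
next
  case (Suc j)
  obtain W where W: "algebraic_int W" "\<pi> ^ (p - 1) = of_nat p * (\<pi> * W - 1)"
    using pi_power_eq by blast
  have pj: "p - 1 = Suc j + (p - 2 - j)" using Suc.prems by simp
  have "of_nat p = of_nat p * \<pi> * W - \<pi> ^ (p - 1)" using W(2) by (simp add: algebra_simps)
  hence eq: "of_nat p / \<pi> ^ Suc j = (of_nat p / \<pi> ^ j) * W - \<pi> ^ (p - 2 - j)"
    using pi_nonzero by (subst (asm) pj) (simp add: field_simps power_add)
  have "algebraic_int ((of_nat p / \<pi> ^ j) * W - \<pi> ^ (p - 2 - j))"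
    using Suc W(1) algebraic_int_pi by (intro algebraic_int_diff algebraic_int_mult) auto
  thus ?case by (simp only: eq)
qed

lemma prime_dvd_if_algebraic_int_div_pi:
  assumes "algebraic_int (of_int n / \<pi>)"
  shows "int p dvd n"
proof -
  have "algebraic_int ((of_int n / \<pi>) ^ (p - 1) * (\<pi> ^ (p - 1) / of_nat p))"
    using assms algebraic_int_pi_power_div_p by blast
  also have "(of_int n / \<pi>) ^ (p - 1) * (\<pi> ^ (p - 1) / of_nat p) = of_int (n ^ (p - 1)) / of_int (int p)"
    using pi_nonzero by (simp add: power_divide)
  finally have "of_int (n ^ (p - 1)) / of_int (int p) \<in> (\<int> :: complex set)"
    by (intro rational_algebraic_int_is_int) simp_all
  then obtain m where "(of_int (n ^ (p - 1)) / of_int (int p) :: complex) = of_int m"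
    by (auto elim: Ints_cases)
  hence "(of_int (n ^ (p - 1)) :: complex) = of_int (int p * m)" using p_gt_2 by (simp add: field_simps)
  hence "int p dvd n ^ (p - 1)" by (simp only: of_int_eq_iff) simp
  thus ?thesis using prime_p prime_dvd_power[of "int p"] by simp
qed

text \<open>Dividing \<open>h(\<pi>) = 0\<close> by \<open>\<pi>^(k0+1)\<close> exhibits \<open>h_k0 / \<pi>\<close> as an algebraic integer:
  each lower term becomes \<open>(h_i / p) (p / \<pi>^(k0+1-i))\<close>.\<close>

lemma algebraic_int_coeff_div_pi:
  fixes h :: "int poly"
  assumes dh: "degree h \<le> p - 2" and h0: "poly (map_poly of_int h) \<pi> = 0" and k0d: "k0 \<le> p - 2"
    and below: "\<And>i. i < k0 \<Longrightarrow> int p dvd coeff h i"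
  shows "algebraic_int (of_int (coeff h k0) / \<pi>)"
proof -
  define d where "d = p - 2"
  define hc where "hc = (\<lambda>k. complex_of_int (coeff h k))"
  have sum0: "(\<Sum>i\<le>d. hc i * \<pi> ^ i) = 0"
    using h0 poly_of_int_eq_sum[OF dh] unfolding hc_def d_def by simp
  have "{..d} = {..<k0} \<union> {k0} \<union> {k0<..d}" using k0d unfolding d_def by auto
  hence "(\<Sum>i\<le>d. hc i * \<pi> ^ i) = (\<Sum>i<k0. hc i * \<pi> ^ i) + hc k0 * \<pi> ^ k0 + (\<Sum>i\<in>{k0<..d}. hc i * \<pi> ^ i)"
    by (simp only:) (subst sum.union_disjoint, auto)+
  hence s1: "(\<Sum>i<k0. hc i * \<pi> ^ i) + (\<Sum>i\<in>{k0<..d}. hc i * \<pi> ^ i) = - (hc k0 * \<pi> ^ k0)"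
    using sum0 by (simp add: algebra_simps eq_neg_iff_add_eq_0)
  define X where "X = (\<Sum>i<k0. of_int (coeff h i div int p) * (of_nat p / \<pi> ^ (k0 + 1 - i)))
      + (\<Sum>i\<in>{k0<..d}. hc i * \<pi> ^ (i - k0 - 1))"
  have aX: "algebraic_int X" unfolding X_def
  proof (intro algebraic_int_add algebraic_int_sum algebraic_int_mult algebraic_int_power)
    fix i assume "i \<in> {..<k0}"
    hence "k0 + 1 - i \<le> p - 1" using k0d by auto
    thus "algebraic_int (of_nat p / \<pi> ^ (k0 + 1 - i))" by (rule algebraic_int_p_div_pi_power)
  qed (auto simp: hc_def algebraic_int_pi)
  have lower: "of_int (coeff h i div int p) * (of_nat p / \<pi> ^ (k0 + 1 - i)) * \<pi> ^ (k0 + 1) = hc i * \<pi> ^ i"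
    if "i < k0" for i
  proof -
    have e: "\<pi> ^ (k0 + 1) = \<pi> ^ (k0 + 1 - i) * \<pi> ^ i" using that by (simp flip: power_add)
    have "of_int (coeff h i div int p) * of_nat p = hc i"
      using below[OF that] unfolding hc_def by (metis dvd_div_mult_self of_int_mult of_int_of_nat_eq)
    thus ?thesis unfolding e using pi_nonzero by (simp add: field_simps)
  qed
  have upper: "hc i * \<pi> ^ (i - k0 - 1) * \<pi> ^ (k0 + 1) = hc i * \<pi> ^ i" if "i \<in> {k0<..d}" for i
  proof -
    have "i - k0 - 1 + (k0 + 1) = i" using that by auto
    thus ?thesis by (simp only: mult.assoc power_add[symmetric])
  qed
  have "X * \<pi> ^ (k0 + 1) =
      (\<Sum>i<k0. of_int (coeff h i div int p) * (of_nat p / \<pi> ^ (k0 + 1 - i)) * \<pi> ^ (k0 + 1))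
      + (\<Sum>i\<in>{k0<..d}. hc i * \<pi> ^ (i - k0 - 1) * \<pi> ^ (k0 + 1))"
    unfolding X_def by (simp only: distrib_right sum_distrib_right)
  also have "\<dots> = (\<Sum>i<k0. hc i * \<pi> ^ i) + (\<Sum>i\<in>{k0<..d}. hc i * \<pi> ^ i)"
    by (intro arg_cong2[where f = "(+)"] sum.cong refl) (use lower upper in auto)
  finally have "X * \<pi> ^ (k0 + 1) = (\<Sum>i<k0. hc i * \<pi> ^ i) + (\<Sum>i\<in>{k0<..d}. hc i * \<pi> ^ i)" .
  hence "(hc k0 + X * \<pi>) * \<pi> ^ k0 = 0" using s1 by (simp add: algebra_simps)
  hence "hc k0 + X * \<pi> = 0" using pi_nonzero by simp
  hence "hc k0 / \<pi> = - X" using pi_nonzero by (simp add: field_simps eq_neg_iff_add_eq_0)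
  thus ?thesis using aX unfolding hc_def by simp
qed

lemma prime_dvd_coeff_if_poly_pi_eq_0:
  fixes h :: "int poly"
  assumes dh: "degree h \<le> p - 2" and h0: "poly (map_poly of_int h) \<pi> = 0"
  shows "int p dvd coeff h k"
proof (rule ccontr)
  assume "\<not> int p dvd coeff h k"
  define k0 where "k0 = (LEAST k. \<not> int p dvd coeff h k)"
  have nd: "\<not> int p dvd coeff h k0" unfolding k0_def by (rule LeastI, fact)
  have below: "int p dvd coeff h i" if "i < k0" for i
    using not_less_Least[OF that[unfolded k0_def]] by simp
  have "k0 \<le> degree h"
    using nd by (metis coeff_eq_0 dvd_0_right not_le)
  hence "k0 \<le> p - 2" using dh by simp
  hence "algebraic_int (of_int (coeff h k0) / \<pi>)"
    by (rule algebraic_int_coeff_div_pi[OF dh h0 _ below])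
  thus False using nd prime_dvd_if_algebraic_int_div_pi by blast
qed

lemma prime_power_dvd_coeff_if_poly_pi_eq_0:
  "degree h \<le> p - 2 \<Longrightarrow> poly (map_poly of_int h) \<pi> = 0 \<Longrightarrow> int p ^ n dvd coeff h k"
proof (induction n arbitrary: h k)
  case 0 thus ?case by simp
next
  case (Suc n)
  define h1 where "h1 = map_poly (\<lambda>c. c div int p) h"
  have ch: "coeff h i = int p * coeff h1 i" for i
    using prime_dvd_coeff_if_poly_pi_eq_0[OF Suc.prems, of i] unfolding h1_def
    by (simp add: coeff_map_poly)
  have "h = Polynomial.smult (int p) h1" by (rule poly_eqI) (simp add: ch)
  hence "poly (map_poly (of_int :: int \<Rightarrow> complex) h) \<pi> = of_nat p * poly (map_poly of_int h1) \<pi>"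
    by (simp add: of_int_hom.map_poly_hom_smult)
  hence "poly (map_poly of_int h1) \<pi> = 0" using Suc.prems p_gt_2 by simp
  moreover have "degree h1 \<le> p - 2"
    using Suc.prems(1) unfolding h1_def by (meson degree_map_poly_le order_trans)
  ultimately have "int p ^ n dvd coeff h1 k" using Suc.IH by blast
  thus ?case unfolding ch by simp
qed

lemma poly_eq_0_if_poly_pi_eq_0:
  fixes h :: "int poly"
  assumes "degree h \<le> p - 2" "poly (map_poly of_int h) \<pi> = 0"
  shows "h = 0"
proof (rule poly_eqI, rule ccontr)
  fix k
  define c where "c = coeff h k"
  assume "coeff h k \<noteq> coeff 0 k"
  hence "c \<noteq> 0" unfolding c_def by simp
  moreover have "int p ^ nat \<bar>c\<bar> dvd c"
    using prime_power_dvd_coeff_if_poly_pi_eq_0[OF assms] unfolding c_def by blast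
  ultimately have "\<bar>int p ^ nat \<bar>c\<bar>\<bar> \<le> \<bar>c\<bar>" by (rule dvd_imp_le_int)
  moreover have "\<bar>c\<bar> < 2 ^ nat \<bar>c\<bar>"
    by (metis abs_ge_zero int_nat_eq less_exp of_nat_less_iff of_nat_numeral of_nat_power)
  moreover have "(2::int) ^ nat \<bar>c\<bar> \<le> int p ^ nat \<bar>c\<bar>" using p_gt_2 by (intro power_mono) auto
  ultimately show False by simp
qed

lemma coeffs_constant_if_sum_zeta_powers_eq_0:
  fixes F :: "nat \<Rightarrow> int"
  assumes sum0: "(\<Sum>i<p. of_int (F i) * zeta p ^ i) = 0" and "i < p"
  shows "F i = F (p - 1)"
proof -
  define G where "G = (\<lambda>i. F i - F (p - 1))"
  have "(\<Sum>i<p. of_int (G i) * zeta p ^ i) =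
      (\<Sum>i<p. of_int (F i) * zeta p ^ i) - of_int (F (p - 1)) * (\<Sum>i<p. (zeta p ^ 1) ^ i)"
    unfolding G_def by (simp add: algebra_simps sum_subtractf sum_distrib_left sum_distrib_right)
  also have "(\<Sum>i<p. (zeta p ^ 1) ^ i) = 0"
    by (rule sum_powers_zeta_power_eq_0) (use p_gt_2 in auto)
  finally have sG: "(\<Sum>i<p. of_int (G i) * zeta p ^ i) = 0" using sum0 by simp
  define T where "T = (\<Sum>i<p - 1. Polynomial.monom (G i) i)"
  have cT: "coeff T n = (if n < p - 1 then G n else 0)" for n
    unfolding T_def by (simp add: coeff_sum coeff_monom)
  have dT: "degree T \<le> p - 2" by (rule degree_le) (auto simp: cT)
  have "poly (map_poly of_int T) (zeta p) = (\<Sum>i\<le>p - 2. of_int (coeff T i) * zeta p ^ i)"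
    by (rule poly_of_int_eq_sum[OF dT])
  also have "\<dots> = (\<Sum>i<p - 1. of_int (G i) * zeta p ^ i)"
    using p_gt_2 by (intro sum.cong) (auto simp: cT)
  also have "\<dots> = (\<Sum>i<p. of_int (G i) * zeta p ^ i)"
  proof -
    have "{..<p} = insert (p - 1) {..<p - 1}" using p_gt_2 by auto
    thus ?thesis by (simp add: G_def)
  qed
  finally have T0: "poly (map_poly of_int T) (zeta p) = 0" using sG by simp
  define h where "h = pcompose T [:1, -1:]"
  have "degree h \<le> p - 2" unfolding h_def using degree_pcompose_le[of T "[:1,-1:]"] dT by simp
  moreover have "poly (map_poly (of_int :: int \<Rightarrow> complex) h) \<pi> = 0"
    using T0 unfolding h_def \<pi>_def by (simp add: of_int_hom.map_poly_pcompose poly_pcompose)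
  ultimately have h0: "h = 0" by (rule poly_eq_0_if_poly_pi_eq_0)
  have "T = pcompose T (pcompose [:1, -1:] [:1, -1:])" by (simp add: pcompose_pCons)
  also have "\<dots> = pcompose h [:1, -1:]" unfolding h_def by (rule pcompose_assoc)
  finally have "T = 0" using h0 by simp
  hence "G i = 0" if "i < p - 1" for i using cT[of i] that by simp
  thus "F i = F (p - 1)" using \<open>i < p\<close> unfolding G_def by (cases "i = p - 1") auto
qed

lemma poly_zeta_power_eq_0:
  fixes f :: "int poly"
  assumes f0: "poly (map_poly of_int f) (zeta p) = 0" and s: "\<not> p dvd s"
  shows "poly (map_poly of_int f) (zeta p ^ s) = (0::complex)"
proof -
  define F where "F = (\<lambda>i. \<Sum>k\<in>{k\<in>{..degree f}. k mod p = i}. coeff f k)"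
  have p0: "p > 0" using p_gt_2 by simp
  have grouped: "poly (map_poly of_int f) (zeta p ^ k) = (\<Sum>i<p. of_int (F i) * (zeta p ^ k) ^ i)" for k
    unfolding F_def by (rule poly_root_of_unity_eq_sum_mod[OF p0 power_zeta_power_self[OF p0]])
  have sum0: "(\<Sum>i<p. of_int (F i) * zeta p ^ i) = 0" using grouped[of 1] f0 by simp
  have const: "F i = F (p - 1)" if "i < p" for i
    using sum0 that by (rule coeffs_constant_if_sum_zeta_powers_eq_0)
  have "poly (map_poly of_int f) (zeta p ^ s) = (\<Sum>i<p. of_int (F (p - 1)) * (zeta p ^ s) ^ i)"
    unfolding grouped
  proof (rule sum.cong[OF refl])
    fix i assume "i \<in> {..<p}"
    thus "of_int (F i) * (zeta p ^ s) ^ i = of_int (F (p - 1)) * (zeta p ^ s) ^ i" using const[of i] by simp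
  qed
  also have "\<dots> = of_int (F (p - 1)) * (\<Sum>i<p. (zeta p ^ s) ^ i)" by (simp add: sum_distrib_left)
  also have "(\<Sum>i<p. (zeta p ^ s) ^ i) = 0" by (rule sum_powers_zeta_power_eq_0[OF p0 s])
  finally show ?thesis by simp
qed

text \<open>If the monic integer polynomial \<open>P\<close> has root \<open>G(\<zeta>) / m\<close>, then
  \<open>m^(deg P) P(G(x) / m)\<close> is an integer polynomial in \<open>x\<close> vanishing at \<open>\<zeta>\<close>.\<close>

lemma algebraic_int_conjugate:
  fixes G :: "int poly" and m :: nat
  assumes a: "algebraic_int (poly (map_poly of_int G) (zeta p) / of_nat m)" and s: "\<not> p dvd s"
  shows "algebraic_int (poly (map_poly of_int G) (zeta p ^ s) / of_nat m)"
proof (cases "m = 0")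
  case False
  obtain P where P: "poly (map_poly of_int P) (poly (map_poly of_int G) (zeta p) / of_nat m) = (0::complex)"
      "lead_coeff P = 1"
    using a unfolding algebraic_int_altdef_ipoly by blast
  define D where "D = degree P"
  define P' where "P' = (\<Sum>j\<le>D. Polynomial.monom (coeff P j * int m ^ (D - j)) j)"
  have cP': "coeff P' n = (if n \<le> D then coeff P n * int m ^ (D - n) else 0)" for n
    unfolding P'_def by (simp add: coeff_sum coeff_monom)
  have dP': "degree P' \<le> D" by (rule degree_le) (auto simp: cP')
  have scaled: "poly (map_poly of_int P') (of_nat m * y) = of_nat m ^ D * poly (map_poly of_int P) (y::complex)" for y
  proof -
    have "poly (map_poly of_int P') (of_nat m * y) = (\<Sum>j\<le>D. of_int (coeff P' j) * (of_nat m * y) ^ j)"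
      by (rule poly_of_int_eq_sum[OF dP'])
    also have "\<dots> = (\<Sum>j\<le>D. of_nat m ^ D * (of_int (coeff P j) * y ^ j))"
    proof (intro sum.cong refl)
      fix j assume j: "j \<in> {..D}"
      have "(of_nat m :: complex) ^ (D - j) * of_nat m ^ j = of_nat m ^ D" using j by (simp flip: power_add)
      thus "of_int (coeff P' j) * (of_nat m * y) ^ j = of_nat m ^ D * (of_int (coeff P j) * y ^ j)"
        using j by (simp add: cP' power_mult_distrib)
    qed
    also have "\<dots> = of_nat m ^ D * poly (map_poly of_int P) y"
      by (simp add: sum_distrib_left poly_of_int_eq_sum[of P D] D_def)
    finally show ?thesis .
  qed
  define Q where "Q = pcompose P' G"
  have Qz: "poly (map_poly of_int Q) z = of_nat m ^ D * poly (map_poly of_int P) (poly (map_poly of_int G) z / of_nat m)"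
    for z :: complex
    using scaled[of "poly (map_poly of_int G) z / of_nat m"] False
    by (simp add: Q_def of_int_hom.map_poly_pcompose poly_pcompose)
  have "poly (map_poly of_int Q) (zeta p) = (0::complex)" using Qz P(1) by simp
  hence "poly (map_poly of_int Q) (zeta p ^ s) = (0::complex)" by (rule poly_zeta_power_eq_0[OF _ s])
  hence "poly (map_poly of_int P) (poly (map_poly of_int G) (zeta p ^ s) / of_nat m) = (0::complex)"
    using Qz[of "zeta p ^ s"] False by simp
  thus ?thesis unfolding algebraic_int_altdef_ipoly using P(2) by blast
qed simp

lemma dvd_trace_if_algebraic_int_div:
  fixes G :: "int poly" and T :: int and m :: nat
  assumes "m > 0" and a: "algebraic_int (poly (map_poly of_int G) (zeta p) / of_nat m)"
    and trace: "(\<Sum>s\<in>{1..<p}. poly (map_poly of_int G) (zeta p ^ s)) = (of_int T :: complex)"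
  shows "int m dvd T"
proof -
  have "algebraic_int (\<Sum>s\<in>{1..<p}. poly (map_poly of_int G) (zeta p ^ s) / of_nat m)"
  proof (rule algebraic_int_sum)
    fix s assume "s \<in> {1..<p}"
    hence "\<not> p dvd s" by (auto dest: dvd_imp_le)
    thus "algebraic_int (poly (map_poly of_int G) (zeta p ^ s) / of_nat m)"
      by (rule algebraic_int_conjugate[OF a])
  qed
  also have "(\<Sum>s\<in>{1..<p}. poly (map_poly of_int G) (zeta p ^ s) / of_nat m) = of_int T / of_int (int m)"
    using trace by (simp add: sum_divide_distrib[symmetric])
  finally have "of_int T / of_int (int m) \<in> (\<int> :: complex set)"
    by (intro rational_algebraic_int_is_int) simp_all
  then obtain k where "of_int T / of_int (int m) = (of_int k :: complex)" by (auto elim: Ints_cases)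
  hence "(of_int T :: complex) = of_int (int m * k)" using \<open>m > 0\<close> by (simp add: field_simps)
  hence "T = int m * k" by (simp only: of_int_eq_iff)
  thus ?thesis by simp
qed

lemma trace_zeta_power:
  "(\<Sum>s\<in>{1..<p}. (zeta p ^ s) ^ k) = (if p dvd k then of_nat p - 1 else -1)"
proof -
  have p0: "p > 0" using p_gt_2 by simp
  have "(\<Sum>s<p. (zeta p ^ k) ^ s) = (if p dvd k then of_nat p else 0)"
    using zeta_power_eq_1_iff[OF p0, of k] sum_powers_zeta_power_eq_0[OF p0, of k] by auto
  moreover have "{..<p} = insert 0 {1..<p}" using p0 by auto
  moreover have "(\<Sum>s\<in>{1..<p}. (zeta p ^ s) ^ k) = (\<Sum>s\<in>{1..<p}. (zeta p ^ k) ^ s)"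
    by (intro sum.cong refl) (simp only: power_mult[symmetric] mult.commute)
  ultimately have "1 + (\<Sum>s\<in>{1..<p}. (zeta p ^ s) ^ k) = (if p dvd k then of_nat p else 0)" by simp
  thus ?thesis by (cases "p dvd k") (auto simp: eq_diff_eq add.commute add_eq_0_iff)
qed

end

subsection \<open>Congruence modulo 2 in the algebraic integers\<close>

definition cong_mod2 :: "complex \<Rightarrow> complex \<Rightarrow> bool" where
  "cong_mod2 x y \<longleftrightarrow> algebraic_int ((x - y) / 2)"

lemma cong_mod2_refl: "cong_mod2 x x"
  unfolding cong_mod2_def by simp

lemma cong_mod2_sym: "cong_mod2 x y \<Longrightarrow> cong_mod2 y x"
  unfolding cong_mod2_def using algebraic_int_minus[of "(x - y) / 2"] by (simp add: minus_divide_left)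

lemma cong_mod2_trans [trans]: "cong_mod2 x y \<Longrightarrow> cong_mod2 y z \<Longrightarrow> cong_mod2 x z"
  unfolding cong_mod2_def using algebraic_int_add[of "(x - y) / 2" "(y - z) / 2"]
  by (simp add: diff_divide_distrib)

lemma cong_mod2_add: "cong_mod2 a b \<Longrightarrow> cong_mod2 c d \<Longrightarrow> cong_mod2 (a + c) (b + d)"
  unfolding cong_mod2_def using algebraic_int_add[of "(a - b) / 2" "(c - d) / 2"]
  by (simp add: diff_divide_distrib add_divide_distrib algebra_simps)

lemma cong_mod2_mult: "algebraic_int c \<Longrightarrow> cong_mod2 a b \<Longrightarrow> cong_mod2 (c * a) (c * b)"
  unfolding cong_mod2_def using algebraic_int_mult[of c "(a - b) / 2"]
  by (simp add: field_simps)

lemma cong_mod2_double: "algebraic_int x \<Longrightarrow> cong_mod2 (2 * x) 0"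
  unfolding cong_mod2_def by simp

lemma cong_mod2_sum:
  "finite A \<Longrightarrow> (\<And>x. x \<in> A \<Longrightarrow> cong_mod2 (f x) (g x)) \<Longrightarrow> cong_mod2 (\<Sum>x\<in>A. f x) (\<Sum>x\<in>A. g x)"
  by (induction A rule: finite_induct) (auto intro: cong_mod2_add cong_mod2_refl)

lemma cong_mod2_square:
  assumes "algebraic_int a" "algebraic_int b" "cong_mod2 a b"
  shows "cong_mod2 (a ^ 2) (b ^ 2)"
proof -
  have "algebraic_int ((a + b) * ((a - b) / 2))" using assms unfolding cong_mod2_def by blast
  also have "(a + b) * ((a - b) / 2) = (a ^ 2 - b ^ 2) / 2" by (simp add: field_simps power2_eq_square)
  finally show ?thesis unfolding cong_mod2_def .
qed

lemma cong_mod2_power_add: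
  assumes a: "algebraic_int a" and b: "algebraic_int b"
  shows "cong_mod2 ((a + b) ^ (2 ^ n)) (a ^ (2 ^ n) + b ^ (2 ^ n))"
proof (induction n)
  case 0 thus ?case by (simp add: cong_mod2_refl)
next
  case (Suc n)
  let ?A = "a ^ (2 ^ n)" and ?B = "b ^ (2 ^ n)"
  have "cong_mod2 (((a + b) ^ (2 ^ n)) ^ 2) ((?A + ?B) ^ 2)"
    using Suc a b by (intro cong_mod2_square) auto
  also have "(?A + ?B) ^ 2 = ?A ^ 2 + ?B ^ 2 + 2 * (?A * ?B)" by (simp add: power2_eq_square algebra_simps)
  also have "cong_mod2 \<dots> (?A ^ 2 + ?B ^ 2 + 0)"
    using a b by (intro cong_mod2_add cong_mod2_refl cong_mod2_double) auto
  finally show ?case by (simp flip: power_mult add: mult.commute)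
qed

lemma cong_mod2_power_of_int_mult:
  assumes a: "algebraic_int a"
  shows "cong_mod2 ((of_int c * a) ^ (2 ^ n)) (of_int c * a ^ (2 ^ n))"
proof -
  have "even (c ^ (2 ^ n) - c)" by (cases "even c") auto
  then obtain m where m: "c ^ (2 ^ n) - c = 2 * m" by (rule dvdE)
  have "(of_int c * a) ^ (2 ^ n) - of_int c * a ^ (2 ^ n) = of_int (c ^ (2 ^ n) - c) * a ^ (2 ^ n)"
    by (simp add: power_mult_distrib algebra_simps)
  also have "\<dots> = 2 * (of_int m * a ^ (2 ^ n))" unfolding m by simp
  finally show ?thesis unfolding cong_mod2_def using a by auto
qed

lemma cong_mod2_power_sum:
  assumes "finite A" "\<And>x. x \<in> A \<Longrightarrow> algebraic_int (f x)"
  shows "cong_mod2 ((\<Sum>x\<in>A. f x) ^ (2 ^ n)) (\<Sum>x\<in>A. f x ^ (2 ^ n))"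
  using assms
proof (induction A rule: finite_induct)
  case empty show ?case by (simp add: cong_mod2_refl power_0_left)
next
  case (insert x A)
  have "cong_mod2 ((f x + (\<Sum>x\<in>A. f x)) ^ (2 ^ n)) (f x ^ (2 ^ n) + (\<Sum>x\<in>A. f x) ^ (2 ^ n))"
    using insert by (intro cong_mod2_power_add) auto
  also have "cong_mod2 \<dots> (f x ^ (2 ^ n) + (\<Sum>x\<in>A. f x ^ (2 ^ n)))"
    using insert by (intro cong_mod2_add cong_mod2_refl) auto
  finally show ?case using insert by simp
qed

subsection \<open>The basis of \<open>\<I>\<close> under the Frobenius power\<close>

lemma bP_1_mult: "j \<ge> 1 \<Longrightarrow> bP p 1 * bP p j = bP p (Suc j) + bP p (j - 1)"
proof -
  assume "j \<ge> 1"
  then obtain i where i: "j = Suc i" by (cases j) auto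
  have "zeta p ^ i \<noteq> 0" using zeta_nonzero by simp
  thus ?thesis unfolding bP_def i using zeta_nonzero[of p] by (simp add: field_simps)
qed

locale cyclotomic_setting = odd_prime +
  fixes r :: nat
  assumes r_ge_3: "r \<ge> 3" and p_ge_5: "p \<ge> 5"
begin

definition frob_exp :: nat where "frob_exp = r * (p - 1)"

definition n2 :: nat where "n2 = (p - 1) div 2"

lemma p_eq: "p = 2 * n2 + 1"
  using odd_p unfolding n2_def by simp

lemma n2_ge_2: "n2 \<ge> 2"
  using p_eq p_ge_5 by linarith

lemma zeta_2r_power_frob: "zeta (2 ^ r) ^ (k * 2 ^ frob_exp) = 1"
proof -
  have "r * 1 \<le> r * (p - 1)" using p_ge_5 by (intro mult_le_mono2) simp
  hence "r \<le> frob_exp" unfolding frob_exp_def by simp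
  hence "2 ^ r dvd k * (2::nat) ^ frob_exp" by (simp add: le_imp_power_dvd)
  thus ?thesis by (simp add: zeta_power_eq_1_iff)
qed

lemma zeta_p_power_frob: "zeta p ^ (k * 2 ^ frob_exp) = zeta p ^ k"
proof -
  have "\<not> p dvd 2" using p_ge_5 by (auto dest: dvd_imp_le)
  hence "[2 ^ (p - 1) = 1] (mod p)" using fermat_theorem[OF prime_p] by blast
  hence "[(2 ^ (p - 1)) ^ r = 1 ^ r] (mod p)" by (rule cong_pow)
  hence "2 ^ frob_exp mod p = 1"
    using p_ge_5 unfolding frob_exp_def by (simp add: cong_def power_mult mult.commute[of r])
  hence "(k * 2 ^ frob_exp) mod p = k mod p" by (metis mod_mult_right_eq mult.right_neutral)
  thus ?thesis using zeta_power_mod p_gt_2 by (metis zero_less_numeral less_trans)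
qed

lemma eR_eq: "i \<noteq> 0 \<Longrightarrow> eR r i = zeta (2^r) ^ i + zeta (2^r) ^ (i * (2^r - 1))"
  unfolding eR_def using inverse_zeta_power[of "2^r" i] by simp

lemma bP_eq: "bP p j = zeta p ^ j + zeta p ^ (j * (2 * n2))"
proof -
  have "p - 1 = 2 * n2" using p_eq by linarith
  thus ?thesis unfolding bP_def using inverse_zeta_power[of p j] p_gt_2 by simp
qed

lemma algebraic_int_eR: "algebraic_int (eR r i)"
proof (cases "i = 0")
  case False
  thus ?thesis unfolding eR_eq[OF False] by (intro algebraic_int_add algebraic_int_zeta_power) simp_all
qed (simp add: eR_def)

lemma algebraic_int_bP: "algebraic_int (bP p j)"
  unfolding bP_eq using p_gt_2 by (intro algebraic_int_add algebraic_int_zeta_power) simp_all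

lemma cong_mod2_eR_power: "i \<noteq> 0 \<Longrightarrow> cong_mod2 (eR r i ^ (2 ^ frob_exp)) 0"
proof -
  assume i: "i \<noteq> 0"
  let ?u = "zeta (2^r)"
  have "cong_mod2 (eR r i ^ (2 ^ frob_exp)) ((?u ^ i) ^ (2 ^ frob_exp) + (?u ^ (i * (2^r - 1))) ^ (2 ^ frob_exp))"
    unfolding eR_eq[OF i] by (intro cong_mod2_power_add algebraic_int_zeta_power) simp_all
  also have "(?u ^ i) ^ (2 ^ frob_exp) + (?u ^ (i * (2^r - 1))) ^ (2 ^ frob_exp) = 2 * 1"
    by (simp only: power_mult[symmetric] zeta_2r_power_frob) simp
  also have "cong_mod2 (2 * 1) 0" by (rule cong_mod2_double) simp
  finally show ?thesis .
qed

lemma cong_mod2_bP_power: "cong_mod2 (bP p j ^ (2 ^ frob_exp)) (bP p j)"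
proof -
  let ?v = "zeta p"
  have "cong_mod2 (bP p j ^ (2 ^ frob_exp)) ((?v ^ j) ^ (2 ^ frob_exp) + (?v ^ (j * (2 * n2))) ^ (2 ^ frob_exp))"
    unfolding bP_eq using p_gt_2 by (intro cong_mod2_power_add algebraic_int_zeta_power) simp_all
  also have "(?v ^ j) ^ (2 ^ frob_exp) + (?v ^ (j * (2 * n2))) ^ (2 ^ frob_exp) = bP p j"
    unfolding bP_eq by (simp only: power_mult[symmetric] zeta_p_power_frob)
  finally show ?thesis .
qed

lemma cong_mod2_bP_add_power: "cong_mod2 ((bP p i + bP p j) ^ (2 ^ frob_exp)) (bP p i + bP p j)"
proof -
  have "cong_mod2 ((bP p i + bP p j) ^ (2 ^ frob_exp)) (bP p i ^ (2 ^ frob_exp) + bP p j ^ (2 ^ frob_exp))"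
    by (intro cong_mod2_power_add algebraic_int_bP)
  also have "cong_mod2 \<dots> (bP p i + bP p j)"
    by (intro cong_mod2_add cong_mod2_bP_power)
  finally show ?thesis .
qed

definition weight :: "nat \<Rightarrow> int" where "weight j = (if j = n2 then 2 else 1)"

lemma basis_elt_eq: "basis_elt r p (i, j) = of_int (if i = 0 then weight j else 1) * eR r i * bP p j"
  unfolding basis_elt_def weight_def n2_def by simp

lemma algebraic_int_basis_elt: "algebraic_int (basis_elt r p x)"
  by (cases x) (simp only: basis_elt_eq, intro algebraic_int_mult algebraic_int_of_int algebraic_int_eR algebraic_int_bP)

lemma cong_mod2_basis_elt_power:
  "cong_mod2 (basis_elt r p (i, j) ^ (2 ^ frob_exp)) (if i = 0 then of_int (weight j) * bP p j else 0)"
proof (cases "i = 0")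
  case True
  hence "basis_elt r p (i, j) = of_int (weight j) * bP p j" by (simp add: basis_elt_eq eR_def)
  hence "cong_mod2 (basis_elt r p (i, j) ^ (2 ^ frob_exp)) (of_int (weight j) * bP p j ^ (2 ^ frob_exp))"
    by (simp only:) (intro cong_mod2_power_of_int_mult algebraic_int_bP)
  also have "cong_mod2 \<dots> (of_int (weight j) * bP p j)"
    by (intro cong_mod2_mult cong_mod2_bP_power) simp
  finally show ?thesis using True by simp
next
  case False
  hence "basis_elt r p (i, j) = bP p j * eR r i" by (simp add: basis_elt_eq)
  hence "basis_elt r p (i, j) ^ (2 ^ frob_exp) = bP p j ^ (2 ^ frob_exp) * eR r i ^ (2 ^ frob_exp)"
    by (simp add: power_mult_distrib)
  also have "cong_mod2 \<dots> (bP p j ^ (2 ^ frob_exp) * 0)"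
    by (intro cong_mod2_mult cong_mod2_eR_power False algebraic_int_power algebraic_int_bP)
  finally show ?thesis using False by simp
qed

definition index_set :: "(nat \<times> nat) set" where
  "index_set = {0..<2^(r-2)} \<times> {1..n2}"

lemma II_eq: "II r p = Zspan index_set (basis_elt r p)"
  unfolding II_def index_set_def n2_def ..

lemma cong_mod2_power_Zspan_sum:
  fixes c :: "nat \<times> nat \<Rightarrow> int"
  shows "cong_mod2 ((\<Sum>x\<in>index_set. of_int (c x) * basis_elt r p x) ^ (2 ^ frob_exp))
           (\<Sum>j\<in>{1..n2}. of_int (c (0, j) * weight j) * bP p j)"
proof -
  have fin: "finite index_set" unfolding index_set_def by simp
  let ?R = "\<lambda>x. of_int (c x) * (if fst x = 0 then of_int (weight (snd x)) * bP p (snd x) else 0)"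
  have "cong_mod2 ((\<Sum>x\<in>index_set. of_int (c x) * basis_elt r p x) ^ (2 ^ frob_exp))
      (\<Sum>x\<in>index_set. (of_int (c x) * basis_elt r p x) ^ (2 ^ frob_exp))"
    using fin by (intro cong_mod2_power_sum algebraic_int_mult algebraic_int_basis_elt) simp_all
  also have "cong_mod2 \<dots> (\<Sum>x\<in>index_set. of_int (c x) * basis_elt r p x ^ (2 ^ frob_exp))"
    using fin by (intro cong_mod2_sum cong_mod2_power_of_int_mult algebraic_int_basis_elt)
  also have "cong_mod2 \<dots> (\<Sum>x\<in>index_set. ?R x)"
  proof (rule cong_mod2_sum[OF fin])
    fix x :: "nat \<times> nat"
    show "cong_mod2 (of_int (c x) * basis_elt r p x ^ (2 ^ frob_exp)) (?R x)"
      by (cases x) (simp only: fst_conv snd_conv, intro cong_mod2_mult cong_mod2_basis_elt_power, simp)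
  qed
  also have "(\<Sum>x\<in>index_set. ?R x) =
      (\<Sum>i\<in>{0..<(2::nat)^(r-2)}. if i = 0 then (\<Sum>j\<in>{1..n2}. of_int (c (0, j) * weight j) * bP p j) else 0)"
    unfolding index_set_def sum.cartesian_product' by (intro sum.cong refl) (auto simp: mult.assoc)
  also have "\<dots> = (\<Sum>j\<in>{1..n2}. of_int (c (0, j) * weight j) * bP p j)"
    by (simp add: sum.delta)
  finally show ?thesis .
qed

subsection \<open>The parity obstruction\<close>

lemma trace_shifted_bP:
  assumes "j \<le> n2"
  shows "(\<Sum>s\<in>{1..<p}. (zeta p ^ s) ^ (n2 + 1 + j) + (zeta p ^ s) ^ (n2 + 1 + j * (2 * n2))) =
    (if j = n2 then of_nat p - 2 else -2)"
proof -
  have "p dvd n2 + 1 + j \<longleftrightarrow> j = n2"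
  proof
    assume "p dvd n2 + 1 + j"
    hence "p \<le> n2 + 1 + j" by (rule dvd_imp_le) simp
    thus "j = n2" using assms p_eq by linarith
  next
    assume "j = n2"
    hence "n2 + 1 + j = p" using p_eq by linarith
    thus "p dvd n2 + 1 + j" by simp
  qed
  hence first: "(\<Sum>s\<in>{1..<p}. (zeta p ^ s) ^ (n2 + 1 + j)) = (if j = n2 then of_nat p - 1 else -1)"
    by (simp only: trace_zeta_power)
  have "\<not> p dvd n2 + 1 + j * (2 * n2)"
  proof
    assume dvd: "p dvd n2 + 1 + j * (2 * n2)"
    have "(n2 + 1 + j * (2 * n2)) + (n2 + j) = (2 * n2 + 1) * (j + 1)"
      by (simp add: algebra_simps)
    hence "(n2 + 1 + j * (2 * n2)) + (n2 + j) = p * (j + 1)"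
      by (simp only: p_eq[symmetric])
    hence "p dvd n2 + j" using dvd by (metis dvd_add_right_iff dvd_triv_left)
    hence "p \<le> n2 + j" by (rule dvd_imp_le) (use n2_ge_2 in simp)
    moreover have "n2 + j < p" using assms p_eq by linarith
    ultimately show False by simp
  qed
  hence second: "(\<Sum>s\<in>{1..<p}. (zeta p ^ s) ^ (n2 + 1 + j * (2 * n2))) = -1"
    by (simp only: trace_zeta_power if_False)
  show ?thesis unfolding sum.distrib first second by simp
qed

text \<open>The trace of \<open>\<zeta>_p^(n2+1) \<Sum> w_j b_j\<close> is \<open>w_n2 (p - 2) - 2 \<Sum>_(j \<noteq> n2) w_j\<close>, which is odd.
  The shift makes every exponent nonnegative and turns \<open>b_n2\<close> into \<open>\<zeta>_p^p = 1\<close> plus a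
  nontrivial power.\<close>

lemma bP_combination_not_div_2:
  fixes w :: "nat \<Rightarrow> int"
  assumes "odd (w n2)"
  shows "\<not> algebraic_int ((\<Sum>j\<le>n2. of_int (w j) * bP p j) / 2)"
proof
  assume div2: "algebraic_int ((\<Sum>j\<le>n2. of_int (w j) * bP p j) / 2)"
  define e where "e = (\<lambda>j. n2 + 1 + j)"
  define f where "f = (\<lambda>j. n2 + 1 + j * (2 * n2))"
  define G where "G = (\<Sum>j\<le>n2. Polynomial.monom (w j) (e j) + Polynomial.monom (w j) (f j))"
  have pG: "poly (map_poly of_int G) z = (\<Sum>j\<le>n2. of_int (w j) * (z ^ e j + z ^ f j))" for z :: complex
    unfolding G_def map_poly_of_int_sum of_int_hom.map_poly_hom_add
    by (simp add: poly_sum map_poly_monom poly_monom algebra_simps)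
  have "poly (map_poly of_int G) (zeta p) / of_nat 2 = zeta p ^ (n2 + 1) * ((\<Sum>j\<le>n2. of_int (w j) * bP p j) / 2)"
    unfolding pG bP_eq e_def f_def by (simp add: sum_distrib_left power_add algebra_simps)
  moreover have "algebraic_int (zeta p ^ (n2 + 1) * ((\<Sum>j\<le>n2. of_int (w j) * bP p j) / 2))"
    using div2 p_gt_2 by (intro algebraic_int_mult algebraic_int_zeta_power) auto
  ultimately have aG: "algebraic_int (poly (map_poly of_int G) (zeta p) / of_nat 2)" by simp
  define T where "T = (\<Sum>j\<le>n2. w j * (if j = n2 then int p - 2 else -2))"
  have "(\<Sum>s\<in>{1..<p}. poly (map_poly of_int G) (zeta p ^ s)) =
      (\<Sum>j\<le>n2. of_int (w j) * (\<Sum>s\<in>{1..<p}. (zeta p ^ s) ^ e j + (zeta p ^ s) ^ f j))"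
    unfolding pG by (subst sum.swap) (simp add: sum_distrib_left)
  also have "\<dots> = of_int T"
    unfolding T_def of_int_sum
  proof (intro sum.cong refl)
    fix j assume "j \<in> {..n2}"
    thus "of_int (w j) * (\<Sum>s\<in>{1..<p}. (zeta p ^ s) ^ e j + (zeta p ^ s) ^ f j) =
        of_int (w j * (if j = n2 then int p - 2 else -2))"
      unfolding e_def f_def using trace_shifted_bP[of j] by simp
  qed
  finally have "int 2 dvd T" by (rule dvd_trace_if_algebraic_int_div[OF _ aG, rotated]) simp
  moreover have "odd T"
  proof -
    have "T = w n2 * (int p - 2) + (\<Sum>j\<in>{..n2} - {n2}. w j * (-2))"
      unfolding T_def by (subst sum.remove[of _ n2]) (auto intro!: sum.cong)
    moreover have "even (\<Sum>j\<in>{..n2} - {n2}. w j * (-2))" by (intro dvd_sum) simp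
    moreover have "odd (int p - 2)" using odd_p by simp
    ultimately show ?thesis using assms by simp
  qed
  ultimately show False by simp
qed

lemma not_cong_mod2_bP_sum:
  fixes d :: "nat \<Rightarrow> int"
  assumes "even (d n2)"
  shows "\<not> cong_mod2 (bP p n2 + bP p (n2 - 2)) (\<Sum>j\<in>{1..n2}. of_int (d j) * bP p j)"
proof
  define w where "w = (\<lambda>j. (if j = n2 then 1 else 0) + (if j = n2 - 2 then 1 else 0)
      - (if 1 \<le> j then d j else (0::int)))"
  have "(\<Sum>j\<le>n2. of_int (w j) * bP p j) = (\<Sum>j\<le>n2. (if j = n2 then bP p j else 0)
      + (if j = n2 - 2 then bP p j else 0) - (if 1 \<le> j then of_int (d j) * bP p j else 0))"
    unfolding w_def by (intro sum.cong refl) (auto simp: algebra_simps)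
  also have "\<dots> = bP p n2 + bP p (n2 - 2) - (\<Sum>j\<le>n2. if 1 \<le> j then of_int (d j) * bP p j else 0)"
    by (simp add: sum.distrib sum_subtractf sum.delta)
  also have "(\<Sum>j\<le>n2. if 1 \<le> j then of_int (d j) * bP p j else 0) = (\<Sum>j\<in>{1..n2}. of_int (d j) * bP p j)"
  proof -
    have "{..n2} = insert 0 {1..n2}" by auto
    thus ?thesis by simp
  qed
  finally have "bP p n2 + bP p (n2 - 2) - (\<Sum>j\<in>{1..n2}. of_int (d j) * bP p j) = (\<Sum>j\<le>n2. of_int (w j) * bP p j)"
    by simp
  moreover assume "cong_mod2 (bP p n2 + bP p (n2 - 2)) (\<Sum>j\<in>{1..n2}. of_int (d j) * bP p j)"
  moreover have "odd (w n2)" using assms n2_ge_2 unfolding w_def by simp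
  ultimately show False using bP_combination_not_div_2 unfolding cong_mod2_def by metis
qed

lemma bP_1_in_ring_of_integers: "bP p 1 \<in> ring_of_integers (KK r p)"
  using algebraic_int_bP unfolding ring_of_integers_def KK_def gen_field_def by blast

lemma bP_in_II: "bP p (n2 - 1) \<in> II r p"
proof -
  have "(0, n2 - 1) \<in> index_set" unfolding index_set_def using n2_ge_2 by auto
  hence "basis_elt r p (0, n2 - 1) \<in> II r p"
    unfolding II_eq by (intro Zspan_elt) (simp_all add: index_set_def)
  moreover have "basis_elt r p (0, n2 - 1) = bP p (n2 - 1)"
    unfolding basis_elt_eq weight_def using n2_ge_2 by (simp add: eR_def)
  ultimately show ?thesis by simp
qed

end

theorem proposition3p5:
  fixes r p :: nat
  assumes "r \<ge> 3" and "prime p" and "p \<ge> 5"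
  shows "\<not> is_ideal (II r p) (ring_of_integers (KK r p))"
proof
  interpret cyclotomic_setting p r
    using assms prime_odd_nat[of p] by unfold_locales auto
  assume "is_ideal (II r p) (ring_of_integers (KK r p))"
  hence "bP p 1 * bP p (n2 - 1) \<in> II r p"
    using bP_1_in_ring_of_integers bP_in_II unfolding is_ideal_def by blast
  moreover have "bP p 1 * bP p (n2 - 1) = bP p n2 + bP p (n2 - 2)"
    using bP_1_mult[of "n2 - 1" p] n2_ge_2 by (simp add: Suc_diff_Suc numeral_2_eq_2)
  ultimately obtain c where c: "bP p n2 + bP p (n2 - 2) = (\<Sum>x\<in>index_set. of_int (c x) * basis_elt r p x)"
    unfolding II_eq Zspan_def by auto
  have "cong_mod2 (bP p n2 + bP p (n2 - 2)) ((bP p n2 + bP p (n2 - 2)) ^ (2 ^ frob_exp))"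
    by (rule cong_mod2_sym[OF cong_mod2_bP_add_power])
  also have "cong_mod2 \<dots> (\<Sum>j\<in>{1..n2}. of_int (c (0, j) * weight j) * bP p j)"
    unfolding c by (rule cong_mod2_power_Zspan_sum)
  finally show False
    using not_cong_mod2_bP_sum[of "\<lambda>j. c (0, j) * weight j"] by (simp add: weight_def)
qed

end
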